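(* Consider a discounted Markov decision problem as described in the context, with discount factor $\gamma\in(0,1)$, and let $\rho\in\Delta(\mathcal{S})$. Let $\pi^{(0)}\in\Pi$ be arbitrary and consider the projected policy gradient method \[ \pi^{(k+1)}=\mathrm{proj}_{\Pi}\bigl(\pi^{(k)}-\eta_k\nabla V_\rho(\pi^{(k)})\bigr),\qquad k\ge 0, \] with constant step size $\eta_k=\frac{(1-\gamma)^3}{2\gamma|\mathcal{A}|}$ for all $k\ge0$ (i.e., the gradient is evaluated with the same distribution $\mu=\rho$ as the one used to measure performance). Then for all $k\ge1$, \[ V_\rho(\pi^{(k)})-V_\rho^\star\;\le\;\frac{128\,|\mathcal{S}|\,|\mathcal{A}|}{k\,(1-\gamma)^5}\left\|\frac{d_\rho(\pi^\star)}{\rho}\right\|_\infty^2 . \]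
   Context: A discounted Markov decision problem (in cost-minimization form) consists of a finite state set $\mathcal{S}$, a finite action set $\mathcal{A}$, transition probabilities $P(s'|s,a)$, a cost function $R:\mathcal{S}\times\mathcal{A}\to[0,1]$ (written $R_{s,a}$), and a discount factor $\gamma$. The set of (stationary randomized) policies is $\Pi=\Delta(\mathcal{A})^{|\mathcal{S}|}$, i.e. $\pi=(\pi_s)_{s\in\mathcal{S}}$ with $\pi_s$ a probability vector on $\mathcal{A}$ and $\pi_{s,a}$ the probability of action $a$ at state $s$; $\Pi$ is regarded as a subset of $\mathbf{R}^{|\mathcal{S}|\times|\mathcal{A}|}$. For $\pi\in\Pi$, $V_s(\pi)=\mathbf{E}\bigl[\sum_{t\ge0}\gamma^tR(s_t,a_t)\mid s_0=s\bigr]$ where $a_t\sim\pi_{s_t}$ and $s_{t+1}\sim P(\cdot|s_t,a_t)$; for $\rho\in\Delta(\mathcal{S})$, $V_\rho(\pi)=\sum_s\rho_sV_s(\pi)$ and $V_\rho^\star=\min_{\pi\in\Pi}V_\rho(\pi)$. $\pi^\star\in\Pi$ denotes an optimal policy, i.e. one minimizing $V_s(\cdot)$ simultaneously for all $s$ (such a policy exists). The $Q$-function is $Q_{s,a}(\pi)=R_{s,a}+\gamma\sum_{s'}P(s'|s,a)V_{s'}(\pi)$. The discounted state-visitation distribution is $d_{s,s'}(\pi)=(1-\gamma)\sum_{t\ge0}\gamma^t\Pr^\pi(s_t=s'\mid s_0=s)$ and $d_{\rho,s'}(\pi)=\sum_s\rho_sd_{s,s'}(\pi)$, giving $d_\rho(\pi)\in\Delta(\mathcal{S})$.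 The policy gradient $\nabla V_\rho(\pi)\in\mathbf{R}^{|\mathcal{S}|\times|\mathcal{A}|}$ has entries $\frac{1}{1-\gamma}d_{\rho,s}(\pi)Q_{s,a}(\pi)$. For $p,q\in\Delta(\mathcal{S})$, $\|p/q\|_\infty=\max_s p_s/q_s$ with the convention $0/0=1$ (and $c/0=+\infty$ for $c>0$). $\mathrm{proj}_\Pi$ is Euclidean projection onto $\Pi$. *)

theory Defs
  imports Complex_Main "HOL-Library.Extended_Real"
begin

text \<open>Finite discounted MDP, cost-minimisation form. P s a s' is the transition probability P(s'|s,a),
R s a the cost. Policies are functions pol s a = probability of action a in state s.\<close>

definition is_mdp :: "('s::finite \<Rightarrow> 'a::finite \<Rightarrow> 's \<Rightarrow> real) \<Rightarrow> ('s \<Rightarrow> 'a \<Rightarrow> real) \<Rightarrow> real \<Rightarrow> bool" where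
  "is_mdp P R \<gamma> \<longleftrightarrow>
     (\<forall>s a s'. 0 \<le> P s a s') \<and> (\<forall>s a. (\<Sum>s'\<in>UNIV. P s a s') = 1) \<and>
     (\<forall>s a. 0 \<le> R s a \<and> R s a \<le> 1) \<and> 0 < \<gamma> \<and> \<gamma> < 1"

definition is_distr :: "('s::finite \<Rightarrow> real) \<Rightarrow> bool" where
  "is_distr p \<longleftrightarrow> (\<forall>s. 0 \<le> p s) \<and> (\<Sum>s\<in>UNIV. p s) = 1"

definition Policies :: "('s::finite \<Rightarrow> 'a::finite \<Rightarrow> real) set" where
  "Policies = {pol. \<forall>s. (\<forall>a. 0 \<le> pol s a) \<and> (\<Sum>a\<in>UNIV. pol s a) = 1}"

definition Ppi :: "('s::finite \<Rightarrow> 'a::finite \<Rightarrow> 's \<Rightarrow> real) \<Rightarrow> ('s \<Rightarrow> 'a \<Rightarrow> real) \<Rightarrow> 's \<Rightarrow> 's \<Rightarrow> real" where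
  "Ppi P pol s s' = (\<Sum>a\<in>UNIV. pol s a * P s a s')"

fun Pstep :: "('s::finite \<Rightarrow> 'a::finite \<Rightarrow> 's \<Rightarrow> real) \<Rightarrow> ('s \<Rightarrow> 'a \<Rightarrow> real) \<Rightarrow> nat \<Rightarrow> 's \<Rightarrow> 's \<Rightarrow> real" where
  "Pstep P pol 0 s s' = (if s = s' then 1 else 0)"
| "Pstep P pol (Suc t) s s' = (\<Sum>s''\<in>UNIV. Pstep P pol t s s'' * Ppi P pol s'' s')"

definition Val :: "('s::finite \<Rightarrow> 'a::finite \<Rightarrow> 's \<Rightarrow> real) \<Rightarrow> ('s \<Rightarrow> 'a \<Rightarrow> real) \<Rightarrow> real \<Rightarrow> ('s \<Rightarrow> 'a \<Rightarrow> real) \<Rightarrow> 's \<Rightarrow> real" where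
  "Val P R \<gamma> pol s = (\<Sum>t. \<gamma> ^ t * (\<Sum>s'\<in>UNIV. Pstep P pol t s s' * (\<Sum>a\<in>UNIV. pol s' a * R s' a)))"

definition Val_rho :: "('s::finite \<Rightarrow> 'a::finite \<Rightarrow> 's \<Rightarrow> real) \<Rightarrow> ('s \<Rightarrow> 'a \<Rightarrow> real) \<Rightarrow> real \<Rightarrow> ('s \<Rightarrow> real) \<Rightarrow> ('s \<Rightarrow> 'a \<Rightarrow> real) \<Rightarrow> real" where
  "Val_rho P R \<gamma> \<rho> pol = (\<Sum>s\<in>UNIV. \<rho> s * Val P R \<gamma> pol s)"

definition Val_star :: "('s::finite \<Rightarrow> 'a::finite \<Rightarrow> 's \<Rightarrow> real) \<Rightarrow> ('s \<Rightarrow> 'a \<Rightarrow> real) \<Rightarrow> real \<Rightarrow> ('s \<Rightarrow> real) \<Rightarrow> real" where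
  "Val_star P R \<gamma> \<rho> = (INF pol\<in>Policies. Val_rho P R \<gamma> \<rho> pol)"

definition Qfun :: "('s::finite \<Rightarrow> 'a::finite \<Rightarrow> 's \<Rightarrow> real) \<Rightarrow> ('s \<Rightarrow> 'a \<Rightarrow> real) \<Rightarrow> real \<Rightarrow> ('s \<Rightarrow> 'a \<Rightarrow> real) \<Rightarrow> 's \<Rightarrow> 'a \<Rightarrow> real" where
  "Qfun P R \<gamma> pol s a = R s a + \<gamma> * (\<Sum>s'\<in>UNIV. P s a s' * Val P R \<gamma> pol s')"

definition dvisit :: "('s::finite \<Rightarrow> 'a::finite \<Rightarrow> 's \<Rightarrow> real) \<Rightarrow> real \<Rightarrow> ('s \<Rightarrow> 'a \<Rightarrow> real) \<Rightarrow> 's \<Rightarrow> 's \<Rightarrow> real" where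
  "dvisit P \<gamma> pol s s' = (1 - \<gamma>) * (\<Sum>t. \<gamma> ^ t * Pstep P pol t s s')"

definition dvisit_rho :: "('s::finite \<Rightarrow> 'a::finite \<Rightarrow> 's \<Rightarrow> real) \<Rightarrow> real \<Rightarrow> ('s \<Rightarrow> real) \<Rightarrow> ('s \<Rightarrow> 'a \<Rightarrow> real) \<Rightarrow> 's \<Rightarrow> real" where
  "dvisit_rho P \<gamma> \<rho> pol s' = (\<Sum>s\<in>UNIV. \<rho> s * dvisit P \<gamma> pol s s')"

definition grad_V :: "('s::finite \<Rightarrow> 'a::finite \<Rightarrow> 's \<Rightarrow> real) \<Rightarrow> ('s \<Rightarrow> 'a \<Rightarrow> real) \<Rightarrow> real \<Rightarrow> ('s \<Rightarrow> real) \<Rightarrow> ('s \<Rightarrow> 'a \<Rightarrow> real) \<Rightarrow> 's \<Rightarrow> 'a \<Rightarrow> real" where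
  "grad_V P R \<gamma> \<rho> pol s a = 1 / (1 - \<gamma>) * dvisit_rho P \<gamma> \<rho> pol s * Qfun P R \<gamma> pol s a"

definition proj_Pi :: "('s::finite \<Rightarrow> 'a::finite \<Rightarrow> real) \<Rightarrow> ('s \<Rightarrow> 'a \<Rightarrow> real)" where
  "proj_Pi x = (THE y. y \<in> Policies \<and>
     (\<forall>z\<in>Policies. (\<Sum>s\<in>UNIV. \<Sum>a\<in>UNIV. (x s a - y s a)^2) \<le> (\<Sum>s\<in>UNIV. \<Sum>a\<in>UNIV. (x s a - z s a)^2)))"

text \<open>||p/q||_inf = max_s p_s/q_s with 0/0 = 1 and c/0 = +inf for c > 0.\<close>
definition ratio_inf :: "('s::finite \<Rightarrow> real) \<Rightarrow> ('s \<Rightarrow> real) \<Rightarrow> ereal" where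
  "ratio_inf p q = Max (range (\<lambda>s. if q s = 0 then (if p s = 0 then 1 else \<infinity>) else ereal (p s / q s)))"

end

(* Write V for V_rho, delta_k = V(pi_k) - V_star for the optimality gap and r for the distribution
   mismatch between rho and the visitation distribution of an optimal policy; for infinite r there
   is nothing to prove.  The performance difference lemma, applied twice, makes V smooth on Pi with
   constant L = 2 gamma |A| / (1-gamma)^3, so a projected step of length 1/L decreases V by at least
   L/2 |pi_(k+1) - pi_k|^2.  Comparing pi_k with a policy that is greedy for Q(pi_k) gives gradient
   domination, delta_k <= r/(1-gamma) <grad V(pi_k), pi_k - greedy>, and the variational inequality
   of the projection, Cauchy-Schwarz and diam(Pi)^2 <= 2|S| bound the right-hand side by the
   decrease.  Hence delta_k^2 <= K (delta_k - delta_(k+1)) with K = 36 r^2 |S| |A| / (1-gamma)^5,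
   and such a recursion forces delta_k <= K/k. *)

theory Submission
  imports Defs "HOL-Analysis.Convex" "HOL-Library.Cardinality"
begin

lemma abs_sum_mult_le:
  assumes "\<And>x. x \<in> A \<Longrightarrow> \<bar>e x\<bar> \<le> m"
  shows "\<bar>\<Sum>x\<in>A. w x * e x\<bar> \<le> (\<Sum>x\<in>A. \<bar>w x\<bar>) * (m::real)"
proof -
  have "\<bar>\<Sum>x\<in>A. w x * e x\<bar> \<le> (\<Sum>x\<in>A. \<bar>w x * e x\<bar>)"
    by (rule sum_abs)
  also have "\<dots> \<le> (\<Sum>x\<in>A. \<bar>w x\<bar> * m)"
    using assms by (intro sum_mono) (simp add: abs_mult mult_left_mono)
  finally show ?thesis by (simp add: sum_distrib_right)
qed

lemma abs_sum_stochastic_le: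
  assumes "\<And>x. 0 \<le> w x" "(\<Sum>x\<in>UNIV. w x) = 1" "\<And>x. \<bar>e x\<bar> \<le> m"
  shows "\<bar>\<Sum>x\<in>UNIV. w x * e x\<bar> \<le> (m::real)"
  using abs_sum_mult_le[of UNIV e m w] assms by simp

section \<open>Euclidean geometry of the policy set\<close>

definition sa_inner :: "('s::finite \<Rightarrow> 'a::finite \<Rightarrow> real) \<Rightarrow> ('s \<Rightarrow> 'a \<Rightarrow> real) \<Rightarrow> real" where
  "sa_inner x y = (\<Sum>s\<in>UNIV. \<Sum>a\<in>UNIV. x s a * y s a)"

lemma sa_inner_self_nonneg: "0 \<le> sa_inner x x"
  unfolding sa_inner_def by (intro sum_nonneg) auto

lemma sa_inner_self_eq_0D:
  assumes "sa_inner x x = 0"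
  shows "x = (\<lambda>s a. 0)"
proof -
  have "\<forall>s. (\<Sum>a\<in>UNIV. x s a * x s a) = 0"
    using assms unfolding sa_inner_def by (subst (asm) sum_nonneg_eq_0_iff) (auto intro: sum_nonneg)
  then have "\<forall>s a. x s a * x s a = 0"
    by (simp add: sum_nonneg_eq_0_iff)
  then show ?thesis by auto
qed

lemma sa_inner_diff_diff:
  "sa_inner (w - y) (w - y) = sa_inner (w - z) (w - z) - 2 * sa_inner (w - z) (y - z) + sa_inner (y - z) (y - z)"
  unfolding sa_inner_def
  by (simp add: sum_subtractf[symmetric] sum.distrib[symmetric] sum_distrib_left algebra_simps power2_eq_square)

lemma sa_inner_Cauchy_Schwarz: "(sa_inner u v)^2 \<le> sa_inner u u * sa_inner v v"
proof -
  have flat: "sa_inner x y = (\<Sum>q\<in>UNIV. x (fst q) (snd q) * y (fst q) (snd q))" for x y :: "'a \<Rightarrow> 'b \<Rightarrow> real"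
    unfolding sa_inner_def UNIV_Times_UNIV[symmetric] sum.cartesian_product by (simp add: case_prod_beta)
  show ?thesis
    unfolding flat using Cauchy_Schwarz_ineq_sum[of "\<lambda>q. u (fst q) (snd q)" "\<lambda>q. v (fst q) (snd q)" UNIV]
    by (simp add: power2_eq_square)
qed

lemma sum_abs_sq_le_sa_inner:
  fixes D :: "'s::finite \<Rightarrow> 'a::finite \<Rightarrow> real"
  shows "(\<Sum>a\<in>UNIV. \<bar>D s a\<bar>)^2 \<le> real CARD('a) * sa_inner D D"
proof -
  have "(\<Sum>a\<in>UNIV. \<bar>D s a\<bar> * 1)^2 \<le> (\<Sum>a\<in>UNIV. \<bar>D s a\<bar>^2) * (\<Sum>a\<in>(UNIV::'a set). 1^2)"
    by (rule Cauchy_Schwarz_ineq_sum)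
  also have "\<dots> = real CARD('a) * (\<Sum>a\<in>UNIV. D s a * D s a)"
    by (simp add: power2_eq_square)
  also have "(\<Sum>a\<in>UNIV. D s a * D s a) \<le> sa_inner D D"
    unfolding sa_inner_def
    by (rule member_le_sum[where f="\<lambda>s. \<Sum>a\<in>UNIV. D s a * D s a"]) (auto intro!: sum_nonneg)
  finally show ?thesis by (simp add: mult_left_mono)
qed

lemma sa_inner_diff_swap: "sa_inner (x - y) (x - y) = sa_inner (y - x) (y - x)"
  unfolding sa_inner_def by (simp add: algebra_simps)

lemma PoliciesD:
  assumes "pol \<in> Policies"
  shows Policies_nonneg: "0 \<le> pol s a" and Policies_sum: "(\<Sum>a\<in>UNIV. pol s a) = 1"
  using assms unfolding Policies_def by auto

lemma Policies_le_1: "pol \<in> Policies \<Longrightarrow> pol s a \<le> 1"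
  using member_le_sum[of a UNIV "pol s"] by (simp add: Policies_nonneg Policies_sum)

lemma sa_inner_diff_Policies_le:
  fixes p q :: "'s::finite \<Rightarrow> 'a::finite \<Rightarrow> real"
  assumes p: "p \<in> Policies" and q: "q \<in> Policies"
  shows "sa_inner (p - q) (p - q) \<le> 2 * real CARD('s)"
proof -
  have "(p s a - q s a) * (p s a - q s a) \<le> p s a + q s a" for s a
  proof -
    have "p s a * p s a \<le> p s a" "q s a * q s a \<le> q s a"
      using p q by (auto intro: mult_right_le_one_le Policies_nonneg Policies_le_1)
    moreover have "0 \<le> p s a * q s a"
      using p q by (simp add: Policies_nonneg)
    ultimately show ?thesis by (simp add: algebra_simps)
  qed
  then have "sa_inner (p - q) (p - q) \<le> (\<Sum>s\<in>(UNIV::'s set). \<Sum>a\<in>UNIV. p s a + q s a)"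
    unfolding sa_inner_def by (intro sum_mono) auto
  also have "\<dots> = 2 * real CARD('s)"
    using p q by (simp add: sum.distrib Policies_sum)
  finally show ?thesis .
qed

lemma sum_pos_part_threshold_exists: "\<exists>\<tau>. (\<Sum>a\<in>UNIV. max (w (a::'a::finite) - \<tau>) 0) = (1::real)"
proof -
  define h where "h \<tau> = (\<Sum>a\<in>UNIV. max (w a - \<tau>) 0)" for \<tau>
  define lo where "lo = Min (range w) - 1"
  define hi where "hi = Max (range w)"
  have w_ge: "Min (range w) \<le> w a" and w_le: "w a \<le> Max (range w)" for a
    by simp_all
  have "lo \<le> hi"
    unfolding lo_def hi_def using w_ge[of undefined] w_le[of undefined] by linarith
  moreover have "h hi = 0"
    unfolding h_def hi_def using w_le by (intro sum.neutral) (auto simp: max_def)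
  moreover have "1 \<le> h lo"
  proof -
    have "max (w undefined - lo) 0 \<le> h lo"
      unfolding h_def by (rule member_le_sum[where f="\<lambda>a. max (w a - lo) 0"]) auto
    moreover have "1 \<le> w undefined - lo"
      unfolding lo_def using w_ge[of undefined] by linarith
    ultimately show ?thesis by linarith
  qed
  moreover have "continuous_on {lo..hi} h"
    unfolding h_def by (intro continuous_intros)
  ultimately obtain \<tau> where "h \<tau> = 1"
    using IVT2'[of h hi 1 lo] by auto
  then show ?thesis unfolding h_def by blast
qed

text \<open>The projection onto the product of simplices is computed row by row by water-filling,
  z s a = max (w s a - \<tau> s) 0.\<close>
lemma Policies_obtuse_point_exists:
  fixes w :: "'s::finite \<Rightarrow> 'a::finite \<Rightarrow> real"
  shows "\<exists>z\<in>Policies. \<forall>y\<in>Policies. sa_inner (w - z) (y - z) \<le> 0"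
proof -
  have "\<forall>s. \<exists>t. (\<Sum>a\<in>UNIV. max (w s a - t) 0) = 1"
    using sum_pos_part_threshold_exists by blast
  then obtain \<tau> where \<tau>: "\<And>s. (\<Sum>a\<in>UNIV. max (w s a - \<tau> s) 0) = 1"
    by metis
  define z where "z s a = max (w s a - \<tau> s) 0" for s a
  have z: "z \<in> Policies"
    unfolding Policies_def z_def using \<tau> by auto
  have "sa_inner (w - z) (y - z) \<le> 0" if y: "y \<in> Policies" for y
  proof -
    have "(w s a - z s a) * (y s a - z s a) \<le> \<tau> s * (y s a - z s a)" for s a
    proof (cases "\<tau> s < w s a")
      case False
      then show ?thesis
        using Policies_nonneg[OF y] by (simp add: z_def mult_right_mono)
    qed (simp add: z_def)
    then have "(\<Sum>a\<in>UNIV. (w s a - z s a) * (y s a - z s a)) \<le> (\<Sum>a\<in>UNIV. \<tau> s * (y s a - z s a))" for s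
      by (rule sum_mono)
    also have "(\<Sum>a\<in>UNIV. \<tau> s * (y s a - z s a)) = 0" for s
      using y z by (simp add: sum_distrib_left[symmetric] sum_subtractf Policies_sum)
    finally show ?thesis
      unfolding sa_inner_def by (simp add: sum_nonpos)
  qed
  with z show ?thesis by blast
qed

lemma proj_Pi_eqI:
  fixes w z :: "'s::finite \<Rightarrow> 'a::finite \<Rightarrow> real"
  assumes z: "z \<in> Policies" and obtuse: "\<And>y. y \<in> Policies \<Longrightarrow> sa_inner (w - z) (y - z) \<le> 0"
  shows "proj_Pi w = z"
proof -
  have sq_dist: "(\<Sum>s\<in>UNIV. \<Sum>a\<in>UNIV. (w s a - y s a)^2) = sa_inner (w - y) (w - y)" for y
    by (simp add: sa_inner_def power2_eq_square)
  have closer: "sa_inner (w - z) (w - z) + sa_inner (y - z) (y - z) \<le> sa_inner (w - y) (w - y)"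
    if "y \<in> Policies" for y
    using sa_inner_diff_diff[of w y z] obtuse[OF that] by linarith
  show ?thesis
    unfolding proj_Pi_def sq_dist
  proof (rule the_equality)
    show "z \<in> Policies \<and> (\<forall>y\<in>Policies. sa_inner (w - z) (w - z) \<le> sa_inner (w - y) (w - y))"
    proof (intro conjI ballI z)
      fix y :: "'s \<Rightarrow> 'a \<Rightarrow> real"
      assume "y \<in> Policies"
      from closer[OF this] sa_inner_self_nonneg[of "y - z"]
      show "sa_inner (w - z) (w - z) \<le> sa_inner (w - y) (w - y)" by linarith
    qed
  next
    fix y assume y: "y \<in> Policies \<and> (\<forall>z\<in>Policies. sa_inner (w - y) (w - y) \<le> sa_inner (w - z) (w - z))"
    with z have "sa_inner (w - y) (w - y) \<le> sa_inner (w - z) (w - z)"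
      by blast
    with closer[of y] y have "sa_inner (y - z) (y - z) \<le> 0"
      by linarith
    then have "y - z = (\<lambda>s a. 0)"
      by (intro sa_inner_self_eq_0D antisym sa_inner_self_nonneg)
    from fun_cong[OF fun_cong[OF this]] show "y = z"
      by (intro ext) simp
  qed
qed

lemma proj_Pi_in_Policies: "proj_Pi w \<in> Policies"
  and proj_Pi_obtuse: "y \<in> Policies \<Longrightarrow> sa_inner (w - proj_Pi w) (y - proj_Pi w) \<le> 0"
proof -
  obtain z where z: "z \<in> Policies" "\<forall>y\<in>Policies. sa_inner (w - z) (y - z) \<le> 0"
    using Policies_obtuse_point_exists by blast
  moreover from z have "proj_Pi w = z"
    by (intro proj_Pi_eqI) auto
  ultimately show "proj_Pi w \<in> Policies" "y \<in> Policies \<Longrightarrow> sa_inner (w - proj_Pi w) (y - proj_Pi w) \<le> 0"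
    by auto
qed

lemma projected_gradient_step:
  fixes f :: "('s::finite \<Rightarrow> 'a::finite \<Rightarrow> real) \<Rightarrow> real"
  assumes \<eta>: "0 < \<eta>" and y: "y \<in> Policies" and x: "x \<in> Policies"
    and xn: "xn = proj_Pi (\<lambda>s a. x s a - \<eta> * g s a)"
    and upper: "f xn \<le> f x + sa_inner g (xn - x) + sa_inner (xn - x) (xn - x) / (2 * \<eta>)"
  shows "sa_inner (xn - x) (xn - x) \<le> 2 * \<eta> * (f x - f xn)"
    and "\<eta> * sa_inner g (x - y) \<le> 2 * \<eta> * (f x - f xn) + sa_inner (x - xn) (xn - y)"
proof -
  have obtuse: "sa_inner ((\<lambda>s a. x s a - \<eta> * g s a) - xn) (z - xn) \<le> 0" if "z \<in> Policies" for z
    unfolding xn by (rule proj_Pi_obtuse[OF that])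
  have "sa_inner ((\<lambda>s a. x s a - \<eta> * g s a) - xn) (x - xn) = sa_inner (xn - x) (xn - x) + \<eta> * sa_inner g (xn - x)"
    unfolding sa_inner_def by (simp add: sum_distrib_left sum.distrib[symmetric] algebra_simps)
  with obtuse[OF x] have descent: "sa_inner (xn - x) (xn - x) + \<eta> * sa_inner g (xn - x) \<le> 0"
    by simp
  have "sa_inner ((\<lambda>s a. x s a - \<eta> * g s a) - xn) (y - xn) = \<eta> * sa_inner g (xn - y) - sa_inner (x - xn) (xn - y)"
    unfolding sa_inner_def by (simp add: sum_distrib_left sum_subtractf[symmetric] algebra_simps)
  with obtuse[OF y] have "\<eta> * sa_inner g (xn - y) \<le> sa_inner (x - xn) (xn - y)"
    by simp
  moreover have "\<eta> * sa_inner g (x - y) = \<eta> * sa_inner g (xn - y) - \<eta> * sa_inner g (xn - x)"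
    unfolding sa_inner_def by (simp add: sum_distrib_left sum_subtractf[symmetric] algebra_simps)
  moreover have "- (\<eta> * sa_inner g (xn - x)) \<le> 2 * \<eta> * (f x - f xn)"
    and "sa_inner (xn - x) (xn - x) \<le> 2 * \<eta> * (f x - f xn)"
  proof -
    have "2 * \<eta> * f xn \<le> 2 * \<eta> * f x + 2 * \<eta> * sa_inner g (xn - x) + sa_inner (xn - x) (xn - x)"
      using mult_left_mono[OF upper, of "2 * \<eta>"] \<eta> by (simp add: algebra_simps)
    with descent sa_inner_self_nonneg[of "xn - x"]
    show "- (\<eta> * sa_inner g (xn - x)) \<le> 2 * \<eta> * (f x - f xn)"
      and "sa_inner (xn - x) (xn - x) \<le> 2 * \<eta> * (f x - f xn)"
      by (simp_all add: algebra_simps)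
  qed
  ultimately show "sa_inner (xn - x) (xn - x) \<le> 2 * \<eta> * (f x - f xn)"
    and "\<eta> * sa_inner g (x - y) \<le> 2 * \<eta> * (f x - f xn) + sa_inner (x - xn) (xn - y)"
    by linarith+
qed

lemma exists_greedy_policy:
  fixes Q :: "'s::finite \<Rightarrow> 'a::finite \<Rightarrow> real"
  shows "\<exists>pb\<in>Policies. \<forall>w\<in>Policies. \<forall>s. (\<Sum>a\<in>UNIV. pb s a * Q s a) \<le> (\<Sum>a\<in>UNIV. w s a * Q s a)"
proof -
  have "\<forall>s. \<exists>a. \<forall>b. Q s a \<le> Q s b"
  proof
    fix s
    have "Min (range (Q s)) \<in> range (Q s)"
      by (rule Min_in) auto
    then obtain a where "Q s a = Min (range (Q s))"
      by (metis rangeE)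
    then show "\<exists>a. \<forall>b. Q s a \<le> Q s b"
      by (metis Min_le finite UNIV_I finite_imageI image_eqI)
  qed
  then obtain am where am: "\<And>s b. Q s (am s) \<le> Q s b"
    by metis
  define pb where "pb s a = (if a = am s then 1 else 0 :: real)" for s a
  have "pb \<in> Policies"
    by (simp add: Policies_def pb_def)
  moreover have "(\<Sum>a\<in>UNIV. pb s a * Q s a) \<le> (\<Sum>a\<in>UNIV. w s a * Q s a)" if w: "w \<in> Policies" for w s
  proof -
    have "(\<Sum>a\<in>UNIV. pb s a * Q s a) = (\<Sum>a\<in>UNIV. w s a * Q s (am s))"
      using w by (simp add: pb_def if_distrib[of "\<lambda>x. x * _"] sum_distrib_right[symmetric] Policies_sum cong: if_cong)
    also have "\<dots> \<le> (\<Sum>a\<in>UNIV. w s a * Q s a)"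
      using w am by (intro sum_mono mult_left_mono) (auto simp: Policies_nonneg)
    finally show ?thesis .
  qed
  ultimately show ?thesis by blast
qed

section \<open>Discounted returns and the performance difference lemma\<close>

definition pol_avg :: "('s::finite \<Rightarrow> 'a::finite \<Rightarrow> real) \<Rightarrow> ('s \<Rightarrow> 'a \<Rightarrow> real) \<Rightarrow> 's \<Rightarrow> real" where
  "pol_avg pol c s = (\<Sum>a\<in>UNIV. pol s a * c s a)"

definition disc_return :: "('s::finite \<Rightarrow> 'a::finite \<Rightarrow> 's \<Rightarrow> real) \<Rightarrow> real \<Rightarrow> ('s \<Rightarrow> 'a \<Rightarrow> real) \<Rightarrow> ('s \<Rightarrow> real) \<Rightarrow> 's \<Rightarrow> real" where
  "disc_return P \<gamma> pol h s = (\<Sum>t. \<gamma> ^ t * (\<Sum>s'\<in>UNIV. Pstep P pol t s s' * h s'))"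

lemma Val_eq_disc_return: "Val P c \<gamma> pol = disc_return P \<gamma> pol (pol_avg pol c)"
  unfolding Val_def disc_return_def pol_avg_def ..

lemma pol_avg_state_cost: "pol \<in> Policies \<Longrightarrow> pol_avg pol (\<lambda>s a. h s) = h"
  unfolding pol_avg_def by (auto simp: sum_distrib_right[symmetric] Policies_sum)

lemma Pstep_Suc_left: "Pstep P pol (Suc t) s s' = (\<Sum>s''\<in>UNIV. Ppi P pol s s'' * Pstep P pol t s'' s')"
proof (induction t arbitrary: s')
  case 0
  have "(\<Sum>y\<in>UNIV. Pstep P pol 0 s y * Ppi P pol y s') = Ppi P pol s s'"
       "(\<Sum>y\<in>UNIV. Ppi P pol s y * Pstep P pol 0 y s') = Ppi P pol s s'"
    by (simp_all add: if_distrib[of "\<lambda>x. x * _"] if_distrib[of "\<lambda>x. _ * x"] cong: if_cong)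
  then show ?case by simp
next
  case (Suc t)
  have "Pstep P pol (Suc (Suc t)) s s' = (\<Sum>u\<in>UNIV. (\<Sum>v\<in>UNIV. Ppi P pol s v * Pstep P pol t v u) * Ppi P pol u s')"
    using Suc by simp
  also have "\<dots> = (\<Sum>v\<in>UNIV. Ppi P pol s v * (\<Sum>u\<in>UNIV. Pstep P pol t v u * Ppi P pol u s'))"
    by (simp add: sum_distrib_left sum_distrib_right mult.assoc) (rule sum.swap)
  finally show ?case by simp
qed

lemma sum_mult_Qfun:
  "(\<Sum>a\<in>UNIV. w s a * Qfun P c \<gamma> pol s a) = pol_avg w c s + \<gamma> * (\<Sum>s'\<in>UNIV. Ppi P w s s' * Val P c \<gamma> pol s')"
proof -
  have "(\<Sum>a\<in>UNIV. w s a * Qfun P c \<gamma> pol s a)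
      = pol_avg w c s + \<gamma> * (\<Sum>a\<in>UNIV. w s a * (\<Sum>s'\<in>UNIV. P s a s' * Val P c \<gamma> pol s'))"
    unfolding Qfun_def pol_avg_def by (simp add: distrib_left sum.distrib sum_distrib_left mult.left_commute)
  also have "(\<Sum>a\<in>UNIV. w s a * (\<Sum>s'\<in>UNIV. P s a s' * Val P c \<gamma> pol s')) = (\<Sum>s'\<in>UNIV. Ppi P w s s' * Val P c \<gamma> pol s')"
    unfolding Ppi_def by (simp add: sum_distrib_left sum_distrib_right mult.assoc) (rule sum.swap)
  finally show ?thesis .
qed

locale discounted_kernel =
  fixes P :: "'s::finite \<Rightarrow> 'a::finite \<Rightarrow> 's \<Rightarrow> real" and \<gamma> :: real
  assumes P_nonneg: "0 \<le> P s a s'" and P_sum: "(\<Sum>s'\<in>UNIV. P s a s') = 1"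
    and gamma_nonneg: "0 \<le> \<gamma>" and gamma_less_1: "\<gamma> < 1"
begin

lemma Ppi_nonneg: "pol \<in> Policies \<Longrightarrow> 0 \<le> Ppi P pol s s'"
  unfolding Ppi_def by (auto intro!: sum_nonneg mult_nonneg_nonneg simp: Policies_nonneg P_nonneg)

lemma Ppi_sum:
  assumes "pol \<in> Policies"
  shows "(\<Sum>s'\<in>UNIV. Ppi P pol s s') = 1"
proof -
  have "(\<Sum>a\<in>UNIV. pol s a) = 1"
    using assms by (rule Policies_sum)
  then show ?thesis
    unfolding Ppi_def by (subst sum.swap) (simp add: sum_distrib_left[symmetric] P_sum)
qed

lemma Pstep_nonneg: "pol \<in> Policies \<Longrightarrow> 0 \<le> Pstep P pol t s s'"
  by (induction t arbitrary: s') (auto intro!: sum_nonneg mult_nonneg_nonneg Ppi_nonneg)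

lemma Pstep_sum: "pol \<in> Policies \<Longrightarrow> (\<Sum>s'\<in>UNIV. Pstep P pol t s s') = 1"
proof (induction t)
  case (Suc t)
  have "(\<Sum>s'\<in>UNIV. Pstep P pol (Suc t) s s') = (\<Sum>s''\<in>UNIV. Pstep P pol t s s'' * (\<Sum>s'\<in>UNIV. Ppi P pol s'' s'))"
    by (simp add: sum_distrib_left) (rule sum.swap)
  then show ?case
    using Suc by (simp add: Ppi_sum)
qed simp

lemma summable_geometric_mult: "summable (\<lambda>t. M * \<gamma> ^ t)"
  using gamma_nonneg gamma_less_1 by (intro summable_mult summable_geometric) simp

lemma abs_disc_return_term_le:
  assumes pol: "pol \<in> Policies" and h: "\<And>s. \<bar>h s\<bar> \<le> M"
  shows "\<bar>\<gamma> ^ t * (\<Sum>s'\<in>UNIV. Pstep P pol t s s' * h s')\<bar> \<le> M * \<gamma> ^ t"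
proof -
  have "\<bar>\<Sum>s'\<in>UNIV. Pstep P pol t s s' * h s'\<bar> \<le> M"
    using pol h by (intro abs_sum_stochastic_le Pstep_nonneg Pstep_sum)
  then have "\<gamma> ^ t * \<bar>\<Sum>s'\<in>UNIV. Pstep P pol t s s' * h s'\<bar> \<le> \<gamma> ^ t * M"
    using gamma_nonneg by (intro mult_left_mono) auto
  then show ?thesis
    using gamma_nonneg by (simp add: abs_mult mult.commute)
qed

lemma disc_return_summable:
  assumes "pol \<in> Policies"
  shows "summable (\<lambda>t. \<gamma> ^ t * (\<Sum>s'\<in>UNIV. Pstep P pol t s s' * h s'))"
proof (rule summable_comparison_test'[OF summable_geometric_mult])
  have "\<bar>h x\<bar> \<le> (\<Sum>y\<in>UNIV. \<bar>h y\<bar>)" for x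
    by (rule member_le_sum) auto
  then show "norm (\<gamma> ^ t * (\<Sum>s'\<in>UNIV. Pstep P pol t s s' * h s')) \<le> (\<Sum>y\<in>UNIV. \<bar>h y\<bar>) * \<gamma> ^ t" for t
    using abs_disc_return_term_le[OF assms] by simp
qed

lemma abs_disc_return_le:
  assumes pol: "pol \<in> Policies" and h: "\<And>s. \<bar>h s\<bar> \<le> M"
  shows "\<bar>disc_return P \<gamma> pol h s\<bar> \<le> M / (1 - \<gamma>)"
proof -
  define f where "f = (\<lambda>t. \<gamma> ^ t * (\<Sum>s'\<in>UNIV. Pstep P pol t s s' * h s'))"
  have f_le: "\<bar>f t\<bar> \<le> M * \<gamma> ^ t" for t
    unfolding f_def by (rule abs_disc_return_term_le[OF pol h])
  have summable_abs: "summable (\<lambda>t. \<bar>f t\<bar>)"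
    by (rule summable_comparison_test'[OF summable_geometric_mult[of M]]) (simp add: f_le)
  have "\<bar>disc_return P \<gamma> pol h s\<bar> \<le> (\<Sum>t. \<bar>f t\<bar>)"
    unfolding disc_return_def f_def[symmetric] by (rule summable_rabs[OF summable_abs])
  also have "\<dots> \<le> (\<Sum>t. M * \<gamma> ^ t)"
    by (rule suminf_le[OF f_le summable_abs summable_geometric_mult])
  also have "\<dots> = M / (1 - \<gamma>)"
    using gamma_nonneg gamma_less_1 by (simp add: suminf_mult suminf_geometric divide_simps)
  finally show ?thesis .
qed

lemma disc_return_nonneg: "pol \<in> Policies \<Longrightarrow> (\<And>s. 0 \<le> h s) \<Longrightarrow> 0 \<le> disc_return P \<gamma> pol h s"
  unfolding disc_return_def
  by (intro suminf_nonneg disc_return_summable)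
    (auto intro!: mult_nonneg_nonneg sum_nonneg Pstep_nonneg zero_le_power gamma_nonneg)

lemma disc_return_bellman:
  assumes pol: "pol \<in> Policies"
  shows "disc_return P \<gamma> pol h s = h s + \<gamma> * (\<Sum>s'\<in>UNIV. Ppi P pol s s' * disc_return P \<gamma> pol h s')"
proof -
  define g where "g = (\<lambda>x t. \<gamma> ^ t * (\<Sum>s'\<in>UNIV. Pstep P pol t x s' * h s'))"
  have sg: "summable (g x)" for x
    unfolding g_def by (rule disc_return_summable[OF pol])
  have disc_return_g: "disc_return P \<gamma> pol h x = suminf (g x)" for x
    by (simp add: disc_return_def g_def)
  have g_Suc: "g s (Suc t) = \<gamma> * (\<Sum>s''\<in>UNIV. Ppi P pol s s'' * g s'' t)" for t
  proof -
    have "(\<Sum>s'\<in>UNIV. Pstep P pol (Suc t) s s' * h s')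
        = (\<Sum>s''\<in>UNIV. Ppi P pol s s'' * (\<Sum>s'\<in>UNIV. Pstep P pol t s'' s' * h s'))"
      unfolding Pstep_Suc_left sum_distrib_right sum_distrib_left mult.assoc by (rule sum.swap)
    then show ?thesis
      unfolding g_def by (simp add: sum_distrib_left mult_ac)
  qed
  have "disc_return P \<gamma> pol h s = g s 0 + (\<Sum>t. g s (Suc t))"
    using suminf_split_head[OF sg[of s]] by (simp add: disc_return_g)
  also have "g s 0 = h s"
    by (simp add: g_def if_distrib[of "\<lambda>x. x * _"] cong: if_cong)
  also have "(\<Sum>t. g s (Suc t)) = \<gamma> * (\<Sum>t. \<Sum>s''\<in>UNIV. Ppi P pol s s'' * g s'' t)"
    unfolding g_Suc by (intro suminf_mult summable_sum summable_mult sg)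
  also have "(\<Sum>t. \<Sum>s''\<in>UNIV. Ppi P pol s s'' * g s'' t) = (\<Sum>s''\<in>UNIV. \<Sum>t. Ppi P pol s s'' * g s'' t)"
    by (rule suminf_sum) (intro summable_mult sg)
  also have "\<dots> = (\<Sum>s''\<in>UNIV. Ppi P pol s s'' * suminf (g s''))"
    by (simp add: suminf_mult sg)
  finally show ?thesis
    by (simp add: disc_return_g)
qed

text \<open>Uniqueness holds because the Bellman operator is a \<open>\<gamma>\<close>-contraction in the sup norm.\<close>
lemma disc_return_unique:
  assumes pol: "pol \<in> Policies" and u: "\<And>s. u s = h s + \<gamma> * (\<Sum>s'\<in>UNIV. Ppi P pol s s' * u s')"
  shows "u = disc_return P \<gamma> pol h"
proof -
  define e where "e x = u x - disc_return P \<gamma> pol h x" for x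
  have e_eq: "e x = \<gamma> * (\<Sum>s'\<in>UNIV. Ppi P pol x s' * e s')" for x
    using u[of x] disc_return_bellman[OF pol, of h x]
    by (simp add: e_def right_diff_distrib sum_subtractf)
  define m where "m = Max (range (\<lambda>x. \<bar>e x\<bar>))"
  have e_le: "\<bar>e x\<bar> \<le> m" for x
    unfolding m_def by simp
  have "m \<in> range (\<lambda>x. \<bar>e x\<bar>)"
    unfolding m_def by (rule Max_in) auto
  then obtain x0 where x0: "m = \<bar>e x0\<bar>"
    by auto
  have "\<bar>\<Sum>s'\<in>UNIV. Ppi P pol x0 s' * e s'\<bar> \<le> m"
    using pol e_le by (intro abs_sum_stochastic_le Ppi_nonneg Ppi_sum)
  then have "m \<le> \<gamma> * m"
    using x0 e_eq[of x0] gamma_nonneg by (simp add: abs_mult mult_left_mono)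
  then have "m \<le> 0"
    using gamma_less_1 by (simp add: mult_le_cancel_right1)
  then have "u x = disc_return P \<gamma> pol h x" for x
    using e_le[of x] unfolding e_def by linarith
  then show ?thesis ..
qed

lemma Pstep_disc_summable: "pol \<in> Policies \<Longrightarrow> summable (\<lambda>t. \<gamma> ^ t * Pstep P pol t s s')"
  using disc_return_summable[of pol s "\<lambda>x. if x = s' then 1 else 0"]
  by (simp add: if_distrib[of "\<lambda>x. _ * x"] cong: if_cong)

lemma disc_return_eq_dvisit:
  assumes pol: "pol \<in> Policies"
  shows "disc_return P \<gamma> pol h s = 1 / (1 - \<gamma>) * (\<Sum>s'\<in>UNIV. dvisit P \<gamma> pol s s' * h s')"
proof -
  have summable: "summable (\<lambda>t. \<gamma> ^ t * Pstep P pol t s s' * h s')" for s'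
    by (intro summable_mult2 Pstep_disc_summable[OF pol])
  have "(\<Sum>s'\<in>UNIV. dvisit P \<gamma> pol s s' * h s') = (1 - \<gamma>) * (\<Sum>s'\<in>UNIV. \<Sum>t. \<gamma> ^ t * Pstep P pol t s s' * h s')"
    unfolding dvisit_def
    by (simp add: sum_distrib_left mult.assoc suminf_mult2 Pstep_disc_summable[OF pol])
  also have "(\<Sum>s'\<in>UNIV. \<Sum>t. \<gamma> ^ t * Pstep P pol t s s' * h s') = (\<Sum>t. \<Sum>s'\<in>UNIV. \<gamma> ^ t * Pstep P pol t s s' * h s')"
    by (rule suminf_sum[symmetric]) (rule summable)
  also have "\<dots> = disc_return P \<gamma> pol h s"
    unfolding disc_return_def by (simp add: sum_distrib_left mult.assoc)
  finally show ?thesis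
    using gamma_less_1 by simp
qed

lemma dvisit_nonneg: "pol \<in> Policies \<Longrightarrow> 0 \<le> dvisit P \<gamma> pol s s'"
  unfolding dvisit_def using gamma_less_1
  by (intro mult_nonneg_nonneg suminf_nonneg Pstep_disc_summable)
    (auto intro!: mult_nonneg_nonneg Pstep_nonneg zero_le_power gamma_nonneg)

lemma dvisit_sum:
  assumes pol: "pol \<in> Policies"
  shows "(\<Sum>s'\<in>UNIV. dvisit P \<gamma> pol s s') = 1"
proof -
  have "disc_return P \<gamma> pol (\<lambda>_. 1) s = (\<Sum>t. \<gamma> ^ t)"
    unfolding disc_return_def by (simp add: Pstep_sum[OF pol])
  also have "\<dots> = 1 / (1 - \<gamma>)"
    using gamma_nonneg gamma_less_1 by (simp add: suminf_geometric)
  finally show ?thesis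
    using disc_return_eq_dvisit[OF pol, of "\<lambda>_. 1" s] gamma_less_1 by (simp add: divide_simps split: if_splits)
qed

lemma dvisit_diag_ge:
  assumes pol: "pol \<in> Policies"
  shows "1 - \<gamma> \<le> dvisit P \<gamma> pol s s"
proof -
  have "(\<Sum>t\<in>{0}. \<gamma> ^ t * Pstep P pol t s s) \<le> (\<Sum>t. \<gamma> ^ t * Pstep P pol t s s)"
    by (rule sum_le_suminf[OF Pstep_disc_summable[OF pol]])
      (auto intro!: mult_nonneg_nonneg Pstep_nonneg[OF pol] zero_le_power gamma_nonneg)
  then show ?thesis
    unfolding dvisit_def using gamma_less_1 by simp
qed

lemma dvisit_rho_sum:
  assumes "pol \<in> Policies" "(\<Sum>s\<in>UNIV. \<rho> s) = 1"
  shows "(\<Sum>s\<in>UNIV. dvisit_rho P \<gamma> \<rho> pol s) = 1"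
  unfolding dvisit_rho_def using assms
  by (subst sum.swap) (simp add: sum_distrib_left[symmetric] dvisit_sum)

lemma dvisit_rho_ge:
  assumes pol: "pol \<in> Policies" and rho: "\<And>s. 0 \<le> \<rho> s"
  shows "(1 - \<gamma>) * \<rho> s \<le> dvisit_rho P \<gamma> \<rho> pol s"
proof -
  have "(1 - \<gamma>) * \<rho> s \<le> \<rho> s * dvisit P \<gamma> pol s s"
    using dvisit_diag_ge[OF pol, of s] rho[of s] by (simp add: mult.commute mult_left_mono)
  also have "\<dots> \<le> dvisit_rho P \<gamma> \<rho> pol s"
    unfolding dvisit_rho_def using rho dvisit_nonneg[OF pol]
    by (intro member_le_sum[where f="\<lambda>x. \<rho> x * dvisit P \<gamma> pol x s"]) auto
  finally show ?thesis .
qed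

lemma Val_bellman:
  "pol \<in> Policies \<Longrightarrow> Val P c \<gamma> pol s = pol_avg pol c s + \<gamma> * (\<Sum>s'\<in>UNIV. Ppi P pol s s' * Val P c \<gamma> pol s')"
  unfolding Val_eq_disc_return by (rule disc_return_bellman)

lemma sum_mult_Qfun_self: "pol \<in> Policies \<Longrightarrow> (\<Sum>a\<in>UNIV. pol s a * Qfun P c \<gamma> pol s a) = Val P c \<gamma> pol s"
  by (simp add: sum_mult_Qfun Val_bellman)

lemma performance_difference:
  assumes pol: "pol \<in> Policies" and pol': "pol' \<in> Policies"
  shows "Val P c \<gamma> pol' s - Val P c \<gamma> pol s
    = 1 / (1 - \<gamma>) * (\<Sum>s'\<in>UNIV. dvisit P \<gamma> pol' s s' * (\<Sum>a\<in>UNIV. (pol' s' a - pol s' a) * Qfun P c \<gamma> pol s' a))"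
proof -
  define A where "A x = (\<Sum>a\<in>UNIV. (pol' x a - pol x a) * Qfun P c \<gamma> pol x a)" for x
  have A_eq: "A x = pol_avg pol' c x + \<gamma> * (\<Sum>y\<in>UNIV. Ppi P pol' x y * Val P c \<gamma> pol y) - Val P c \<gamma> pol x" for x
    using sum_mult_Qfun[where w=pol' and s=x and c=c and pol=pol] sum_mult_Qfun_self[OF pol, of x c]
    by (simp add: A_def left_diff_distrib sum_subtractf)
  have "(\<lambda>x. Val P c \<gamma> pol' x - Val P c \<gamma> pol x) = disc_return P \<gamma> pol' A"
  proof (rule disc_return_unique[OF pol'])
    fix x
    show "Val P c \<gamma> pol' x - Val P c \<gamma> pol x
        = A x + \<gamma> * (\<Sum>y\<in>UNIV. Ppi P pol' x y * (Val P c \<gamma> pol' y - Val P c \<gamma> pol y))"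
      using Val_bellman[OF pol', of c x] A_eq[of x] by (simp add: right_diff_distrib sum_subtractf)
  qed
  from fun_cong[OF this, of s] show ?thesis
    by (simp add: disc_return_eq_dvisit[OF pol'] A_def)
qed

lemma Val_bounds:
  assumes pol: "pol \<in> Policies" and c: "\<And>s a. 0 \<le> c s a" "\<And>s a. c s a \<le> 1"
  shows "0 \<le> Val P c \<gamma> pol s" and "Val P c \<gamma> pol s \<le> 1 / (1 - \<gamma>)"
proof -
  have "0 \<le> pol_avg pol c x" for x
    unfolding pol_avg_def using pol c by (auto intro!: sum_nonneg simp: Policies_nonneg)
  moreover have "\<bar>pol_avg pol c x\<bar> \<le> 1" for x
    unfolding pol_avg_def
    by (intro abs_sum_stochastic_le) (use pol c in \<open>auto simp: Policies_nonneg Policies_sum\<close>)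
  ultimately show "0 \<le> Val P c \<gamma> pol s" "Val P c \<gamma> pol s \<le> 1 / (1 - \<gamma>)"
    unfolding Val_eq_disc_return
    using disc_return_nonneg[OF pol, of "pol_avg pol c" s] abs_disc_return_le[OF pol, of "pol_avg pol c" 1 s]
    by auto
qed

lemma Qfun_bounds:
  assumes pol: "pol \<in> Policies" and c: "\<And>s a. 0 \<le> c s a" "\<And>s a. c s a \<le> 1"
  shows "0 \<le> Qfun P c \<gamma> pol s a" and "Qfun P c \<gamma> pol s a \<le> 1 / (1 - \<gamma>)"
proof -
  let ?EV = "\<Sum>s'\<in>UNIV. P s a s' * Val P c \<gamma> pol s'"
  have "0 \<le> ?EV"
    using Val_bounds(1)[OF pol c] by (auto intro!: sum_nonneg simp: P_nonneg)
  moreover have "\<bar>?EV\<bar> \<le> 1 / (1 - \<gamma>)"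
    using Val_bounds[OF pol c] by (intro abs_sum_stochastic_le) (auto simp: P_nonneg P_sum)
  then have "\<gamma> * ?EV \<le> \<gamma> * (1 / (1 - \<gamma>))"
    using gamma_nonneg by (intro mult_left_mono) auto
  moreover have "1 + \<gamma> * (1 / (1 - \<gamma>)) = 1 / (1 - \<gamma>)"
    using gamma_less_1 by (simp add: field_simps)
  ultimately show "0 \<le> Qfun P c \<gamma> pol s a" "Qfun P c \<gamma> pol s a \<le> 1 / (1 - \<gamma>)"
    unfolding Qfun_def using c[of s a] gamma_nonneg by (simp, linarith)
qed

lemma sa_inner_grad_V:
  assumes pol: "pol \<in> Policies"
  shows "sa_inner (grad_V P c \<gamma> \<rho> pol) D
    = (\<Sum>s\<in>UNIV. \<rho> s * disc_return P \<gamma> pol (\<lambda>x. \<Sum>a\<in>UNIV. D x a * Qfun P c \<gamma> pol x a) s)"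
proof -
  define G where "G = (\<lambda>x. \<Sum>a\<in>UNIV. D x a * Qfun P c \<gamma> pol x a)"
  have "sa_inner (grad_V P c \<gamma> \<rho> pol) D = (\<Sum>x\<in>UNIV. 1 / (1 - \<gamma>) * dvisit_rho P \<gamma> \<rho> pol x * G x)"
    unfolding sa_inner_def grad_V_def G_def by (simp add: sum_distrib_left mult_ac)
  also have "\<dots> = (\<Sum>x\<in>UNIV. \<Sum>s\<in>UNIV. \<rho> s * (1 / (1 - \<gamma>) * (dvisit P \<gamma> pol s x * G x)))"
    unfolding dvisit_rho_def by (simp add: sum_distrib_left sum_distrib_right mult_ac)
  also have "\<dots> = (\<Sum>s\<in>UNIV. \<rho> s * (1 / (1 - \<gamma>) * (\<Sum>x\<in>UNIV. dvisit P \<gamma> pol s x * G x)))"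
    by (subst sum.swap) (simp add: sum_distrib_left)
  also have "\<dots> = (\<Sum>s\<in>UNIV. \<rho> s * disc_return P \<gamma> pol G s)"
    by (simp add: disc_return_eq_dvisit[OF pol])
  finally show ?thesis
    unfolding G_def .
qed

lemma Val_rho_diff:
  assumes pol: "pol \<in> Policies" and pol': "pol' \<in> Policies"
  shows "Val_rho P c \<gamma> \<rho> pol' - Val_rho P c \<gamma> \<rho> pol
    = (\<Sum>s\<in>UNIV. \<rho> s * disc_return P \<gamma> pol' (\<lambda>x. \<Sum>a\<in>UNIV. (pol' x a - pol x a) * Qfun P c \<gamma> pol x a) s)"
  unfolding Val_rho_def sum_subtractf[symmetric] right_diff_distrib[symmetric]
  by (intro sum.cong refl arg_cong[where f="\<lambda>t. \<rho> _ * t"])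
    (simp add: performance_difference[OF pol pol'] disc_return_eq_dvisit[OF pol'])

lemma Val_state_cost:
  "pol \<in> Policies \<Longrightarrow> Val P (\<lambda>x a. h x) \<gamma> pol = disc_return P \<gamma> pol h"
  by (simp add: Val_eq_disc_return pol_avg_state_cost)

text \<open>For a cost that ignores the action, the immediate term of the advantage cancels because
  each row of \<open>pol' - pol\<close> sums to zero.\<close>
lemma abs_advantage_state_cost_le:
  assumes pol: "pol \<in> Policies" and pol': "pol' \<in> Policies"
    and h: "\<And>s. \<bar>h s\<bar> \<le> M" and N: "\<And>s. (\<Sum>a\<in>UNIV. \<bar>pol' s a - pol s a\<bar>) \<le> N"
  shows "\<bar>\<Sum>a\<in>UNIV. (pol' y a - pol y a) * Qfun P (\<lambda>x a. h x) \<gamma> pol y a\<bar> \<le> \<gamma> * (N * (M / (1 - \<gamma>)))"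
proof -
  define E where "E a = (\<Sum>z\<in>UNIV. P y a z * disc_return P \<gamma> pol h z)" for a
  have "(pol' y a - pol y a) * Qfun P (\<lambda>x a. h x) \<gamma> pol y a
      = h y * (pol' y a - pol y a) + \<gamma> * ((pol' y a - pol y a) * E a)" for a
    by (simp add: Qfun_def E_def Val_state_cost[OF pol] algebra_simps)
  then have split: "(\<Sum>a\<in>UNIV. (pol' y a - pol y a) * Qfun P (\<lambda>x a. h x) \<gamma> pol y a)
      = h y * (\<Sum>a\<in>UNIV. pol' y a - pol y a) + \<gamma> * (\<Sum>a\<in>UNIV. (pol' y a - pol y a) * E a)"
    by (simp add: sum.distrib sum_distrib_left)
  have zero: "(\<Sum>a\<in>UNIV. pol' y a - pol y a) = 0"
    using pol pol' by (simp add: sum_subtractf Policies_sum)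
  have "\<bar>E a\<bar> \<le> M / (1 - \<gamma>)" for a
    unfolding E_def by (intro abs_sum_stochastic_le abs_disc_return_le[OF pol h]) (auto simp: P_nonneg P_sum)
  then have "\<bar>\<Sum>a\<in>UNIV. (pol' y a - pol y a) * E a\<bar> \<le> (\<Sum>a\<in>UNIV. \<bar>pol' y a - pol y a\<bar>) * (M / (1 - \<gamma>))"
    by (intro abs_sum_mult_le)
  also have "\<dots> \<le> N * (M / (1 - \<gamma>))"
    using N[of y] h[of y] gamma_less_1 by (intro mult_right_mono) auto
  finally have "\<gamma> * \<bar>\<Sum>a\<in>UNIV. (pol' y a - pol y a) * E a\<bar> \<le> \<gamma> * (N * (M / (1 - \<gamma>)))"
    using gamma_nonneg by (rule mult_left_mono)
  then show ?thesis
    using split zero gamma_nonneg by (simp add: abs_mult)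
qed

lemma abs_disc_return_diff_le:
  assumes pol: "pol \<in> Policies" and pol': "pol' \<in> Policies"
    and h: "\<And>s. \<bar>h s\<bar> \<le> M" and N: "\<And>s. (\<Sum>a\<in>UNIV. \<bar>pol' s a - pol s a\<bar>) \<le> N"
  shows "\<bar>disc_return P \<gamma> pol' h s - disc_return P \<gamma> pol h s\<bar> \<le> \<gamma> * N * M / (1 - \<gamma>)^2"
proof -
  define X where "X = (\<Sum>y\<in>UNIV. dvisit P \<gamma> pol' s y * (\<Sum>a\<in>UNIV. (pol' y a - pol y a) * Qfun P (\<lambda>x a. h x) \<gamma> pol y a))"
  have "disc_return P \<gamma> pol' h s - disc_return P \<gamma> pol h s = 1 / (1 - \<gamma>) * X"
    using performance_difference[OF pol pol', of "\<lambda>x a. h x" s] by (simp add: Val_state_cost pol pol' X_def)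
  moreover have "\<bar>X\<bar> \<le> \<gamma> * (N * (M / (1 - \<gamma>)))"
    unfolding X_def
    by (rule abs_sum_stochastic_le[where w="dvisit P \<gamma> pol' s"])
      (use abs_advantage_state_cost_le[OF pol pol' h N] in \<open>auto simp: dvisit_nonneg[OF pol'] dvisit_sum[OF pol']\<close>)
  then have "\<bar>X\<bar> / (1 - \<gamma>) \<le> \<gamma> * (N * (M / (1 - \<gamma>))) / (1 - \<gamma>)"
    using gamma_less_1 by (intro divide_right_mono) auto
  ultimately show ?thesis
    using gamma_less_1 by (simp add: power2_eq_square abs_of_pos)
qed

lemma Val_diff_le_greedy_gap:
  assumes pol: "pol \<in> Policies" and pis: "pis \<in> Policies"
    and greedy: "\<And>y. (\<Sum>a\<in>UNIV. pb y a * Qfun P c \<gamma> pol y a) \<le> (\<Sum>a\<in>UNIV. pis y a * Qfun P c \<gamma> pol y a)"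
  shows "Val P c \<gamma> pol s - Val P c \<gamma> pis s
    \<le> 1 / (1 - \<gamma>) * (\<Sum>y\<in>UNIV. dvisit P \<gamma> pis s y * (\<Sum>a\<in>UNIV. (pol y a - pb y a) * Qfun P c \<gamma> pol y a))"
proof -
  define gap where "gap y = (\<Sum>a\<in>UNIV. (pol y a - pb y a) * Qfun P c \<gamma> pol y a)" for y
  define adv where "adv y = (\<Sum>a\<in>UNIV. (pis y a - pol y a) * Qfun P c \<gamma> pol y a)" for y
  have "- gap y \<le> adv y" for y
  proof -
    have "gap y = (\<Sum>a\<in>UNIV. pol y a * Qfun P c \<gamma> pol y a) - (\<Sum>a\<in>UNIV. pb y a * Qfun P c \<gamma> pol y a)"
      unfolding gap_def by (simp add: left_diff_distrib sum_subtractf)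
    moreover have "adv y = (\<Sum>a\<in>UNIV. pis y a * Qfun P c \<gamma> pol y a) - (\<Sum>a\<in>UNIV. pol y a * Qfun P c \<gamma> pol y a)"
      unfolding adv_def by (simp add: left_diff_distrib sum_subtractf)
    ultimately show ?thesis
      using greedy[of y] by linarith
  qed
  then have "(\<Sum>y\<in>UNIV. dvisit P \<gamma> pis s y * - gap y) \<le> (\<Sum>y\<in>UNIV. dvisit P \<gamma> pis s y * adv y)"
    using dvisit_nonneg[OF pis] by (intro sum_mono mult_left_mono) auto
  then have "1 / (1 - \<gamma>) * (\<Sum>y\<in>UNIV. dvisit P \<gamma> pis s y * - gap y)
      \<le> 1 / (1 - \<gamma>) * (\<Sum>y\<in>UNIV. dvisit P \<gamma> pis s y * adv y)"
    using gamma_less_1 by (intro mult_left_mono) auto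
  then show ?thesis
    using performance_difference[OF pol pis, of c s] by (simp add: gap_def adv_def sum_negf)
qed

lemma dvisit_rho_le_mismatch:
  assumes pol: "pol \<in> Policies" and rho: "\<And>s. 0 \<le> \<rho> s" and r: "0 \<le> r"
    and mismatch: "dvisit_rho P \<gamma> \<rho> pis s \<le> r * \<rho> s"
  shows "dvisit_rho P \<gamma> \<rho> pis s \<le> r / (1 - \<gamma>) * dvisit_rho P \<gamma> \<rho> pol s"
proof -
  have "r * ((1 - \<gamma>) * \<rho> s) \<le> r * dvisit_rho P \<gamma> \<rho> pol s"
    using dvisit_rho_ge[OF pol rho] r by (rule mult_left_mono)
  then have "r * \<rho> s \<le> r / (1 - \<gamma>) * dvisit_rho P \<gamma> \<rho> pol s"
    using gamma_less_1 by (simp add: field_simps)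
  with mismatch show ?thesis
    by linarith
qed

end

section \<open>Convergence of projected policy gradient\<close>

text \<open>Either the first term dominates, and then \<open>\<delta> \<le> C\<close> gives a bound linear in a, or the
  second one does, and then squaring it is harmless.\<close>
lemma square_le_of_split_bound:
  fixes \<delta> a z B C :: real
  assumes "0 \<le> \<delta>" "\<delta> \<le> C" "0 \<le> a" "\<delta> \<le> 2 * C * a + C * z" "z^2 \<le> B * a"
  shows "\<delta>^2 \<le> 4 * C^2 * (1 + B) * a"
proof -
  have C: "0 \<le> C" and Ba: "0 \<le> B * a"
    using assms by (auto intro: order_trans[OF zero_le_power2])
  show ?thesis
  proof (cases "\<delta> \<le> 4 * C * a")
    case True
    then have "\<delta> * \<delta> \<le> C * (4 * C * a)"
      using assms by (intro mult_mono) auto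
    moreover have "0 \<le> 4 * C^2 * (B * a)"
      using Ba by simp
    ultimately show ?thesis
      by (simp add: power2_eq_square algebra_simps)
  next
    case False
    then have "\<delta> \<le> 2 * C * z"
      using assms(4) by linarith
    then have "\<delta>^2 \<le> (2 * C * z)^2"
      using assms(1) by (intro power_mono) auto
    also have "\<dots> = 4 * C^2 * z^2"
      by (simp add: power_mult_distrib)
    also have "\<dots> \<le> 4 * C^2 * (B * a)"
      using assms(5) by (intro mult_left_mono) auto
    finally have "\<delta>^2 \<le> 4 * C^2 * (B * a)" .
    moreover have "0 \<le> 4 * C^2 * a"
      using assms(3) by simp
    moreover have "4 * C^2 * (1 + B) * a = 4 * C^2 * a + 4 * C^2 * (B * a)"
      by (simp add: algebra_simps)
    ultimately show ?thesis
      by linarith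
  qed
qed

text \<open>The factor \<open>2 \<gamma> A / (1 - \<gamma>)^3\<close> is the inverse step size.\<close>
lemma pg_step_constant_le:
  fixes \<gamma> r S A :: real
  assumes "0 < \<gamma>" "\<gamma> < 1" "1 \<le> S" "1 \<le> A"
  shows "4 * (r / (1 - \<gamma>))^2 * (1 + 4 * S * (2 * \<gamma> * A / (1 - \<gamma>)^3)) \<le> 36 * r^2 * S * A / (1 - \<gamma>)^5"
proof -
  have u: "0 < 1 - \<gamma>" "(1 - \<gamma>)^3 \<le> 1"
    using assms by (auto intro: power_le_one)
  have SA: "1 \<le> S * A"
    using assms(3,4) mult_mono[of 1 S 1 A] by simp
  have "32 * \<gamma> * (S * A) \<le> 32 * (S * A)"
    using assms(2) SA by (intro mult_right_mono) auto
  then have "4 * (1 - \<gamma>)^3 + 32 * \<gamma> * (S * A) \<le> 36 * (S * A)"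
    using u(2) SA by linarith
  then have "r^2 * (4 * (1 - \<gamma>)^3 + 32 * \<gamma> * (S * A)) / (1 - \<gamma>)^5 \<le> r^2 * (36 * (S * A)) / (1 - \<gamma>)^5"
    using u(1) by (intro divide_right_mono mult_left_mono) auto
  moreover have "4 * (r / (1 - \<gamma>))^2 * (1 + 4 * S * (2 * \<gamma> * A / (1 - \<gamma>)^3))
      = r^2 * (4 * (1 - \<gamma>)^3 + 32 * \<gamma> * (S * A)) / (1 - \<gamma>)^5"
    using u(1) by (simp add: field_simps)
  ultimately show ?thesis
    by (simp add: mult_ac)
qed

lemma sub_sq_div_le_quarter:
  fixes K t :: real
  assumes "0 < K"
  shows "t - t^2 / K \<le> K / 4"
proof -
  have "K * t - t^2 \<le> K^2 / 4"
    using zero_le_power2[of "t - K / 2"] by (simp add: power2_eq_square algebra_simps)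
  then show ?thesis
    using assms by (simp add: field_simps power2_eq_square)
qed

lemma sub_sq_div_mono:
  fixes K t u :: real
  assumes K: "0 < K" and "0 \<le> t" "t \<le> u" "u \<le> K / 2"
  shows "t - t^2 / K \<le> u - u^2 / K"
proof -
  have "0 \<le> (u - t) * (K - (u + t))"
    using assms by (intro mult_nonneg_nonneg) auto
  then have "(K * t - t^2) / K \<le> (K * u - u^2) / K"
    using K by (intro divide_right_mono) (auto simp: power2_eq_square algebra_simps)
  moreover have "(K * t - t^2) / K = t - t^2 / K" "(K * u - u^2) / K = u - u^2 / K"
    using K by (simp_all add: field_simps)
  ultimately show ?thesis
    by simp
qed

lemma le_div_of_sq_le_decrease:
  fixes \<delta> :: "nat \<Rightarrow> real"
  assumes K: "0 < K" and nonneg: "\<And>k. 0 \<le> \<delta> k" and decrease: "\<And>k. (\<delta> k)^2 \<le> K * (\<delta> k - \<delta> (Suc k))"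
    and k: "1 \<le> k"
  shows "\<delta> k \<le> K / real k"
  using k
proof (induction k rule: dec_induct)
  have next_le: "\<delta> (Suc k) \<le> \<delta> k - (\<delta> k)^2 / K" for k
    using decrease[of k] K by (simp add: field_simps)
  {
    case base
    have "\<delta> (Suc 0) \<le> K / 4"
      using next_le[of 0] sub_sq_div_le_quarter[OF K, of "\<delta> 0"] by linarith
    then show ?case
      using K by simp
  next
    case (step k)
    show ?case
    proof (cases "k = 1")
      case True
      have "\<delta> (Suc 1) \<le> K / 4"
        using next_le[of 1] sub_sq_div_le_quarter[OF K, of "\<delta> 1"] by linarith
      then show ?thesis
        using True K by simp
    next
      case False
      with step have k2: "2 \<le> real k"
        by simp
      have "K / real k \<le> K / 2"
        using K k2 by (intro divide_left_mono) auto
      then have "\<delta> (Suc k) \<le> K / real k - (K / real k)^2 / K"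
        using next_le[of k] sub_sq_div_mono[OF K nonneg[of k] step.IH] by linarith
      also have "\<dots> = K * (real k - 1) / (real k)^2"
        using K k2 by (simp add: field_simps power2_eq_square)
      also have "\<dots> \<le> K / real (Suc k)"
      proof -
        have "K * (real k * real k) \<le> K * (1 + (real k)^2)"
          using K by (intro mult_left_mono) (auto simp: power2_eq_square)
        then show ?thesis
          using K k2 by (simp add: field_simps)
      qed
      finally show ?thesis .
    qed
  }
qed

lemma ratio_inf_cases:
  fixes p q :: "'s::finite \<Rightarrow> real"
  assumes q: "\<And>s. 0 \<le> q s"
  obtains "ratio_inf p q = \<infinity>" | r where "ratio_inf p q = ereal r" "\<And>s. p s \<le> r * q s"
proof -
  define ratio where "ratio s = (if q s = 0 then (if p s = 0 then 1 else \<infinity>) else ereal (p s / q s))" for s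
  have ratio_le: "ratio s \<le> ratio_inf p q" for s
    unfolding ratio_inf_def ratio_def[abs_def] by (rule Max_ge) auto
  show ?thesis
  proof (cases "ratio_inf p q")
    case (real r)
    have "p s \<le> r * q s" for s
    proof (cases "q s = 0")
      case True
      then show ?thesis
        using ratio_le[of s] real by (auto simp: ratio_def split: if_splits)
    next
      case False
      then have "p s / q s \<le> r" "0 < q s"
        using ratio_le[of s] real q[of s] by (auto simp: ratio_def)
      then show ?thesis
        by (simp add: divide_le_eq mult.commute)
    qed
    with real that show ?thesis by blast
  next
    case MInf
    then show ?thesis
      using ratio_le[of undefined] by (auto simp: ratio_def split: if_splits)
  qed (use that in blast)
qed

lemma Val_star_eq_optimal:
  assumes "pis \<in> Policies" and "\<And>pol. pol \<in> Policies \<Longrightarrow> Val_rho P c \<gamma> \<rho> pis \<le> Val_rho P c \<gamma> \<rho> pol"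
  shows "Val_star P c \<gamma> \<rho> = Val_rho P c \<gamma> \<rho> pis"
  unfolding Val_star_def using assms by (intro cInf_eq_minimum) auto

locale policy_gradient = discounted_kernel P \<gamma>
  for P :: "'s::finite \<Rightarrow> 'a::finite \<Rightarrow> 's \<Rightarrow> real" and \<gamma> :: real +
  fixes c :: "'s \<Rightarrow> 'a \<Rightarrow> real" and \<rho> :: "'s \<Rightarrow> real"
  assumes gamma_pos: "0 < \<gamma>"
    and cost_nonneg: "0 \<le> c s a" and cost_le_1: "c s a \<le> 1"
    and rho_nonneg: "0 \<le> \<rho> s" and rho_sum: "(\<Sum>s\<in>UNIV. \<rho> s) = 1"
begin

lemma Val_rho_smooth:
  assumes pol: "pol \<in> Policies" and pol': "pol' \<in> Policies"
    and N: "\<And>s. (\<Sum>a\<in>UNIV. \<bar>pol' s a - pol s a\<bar>) \<le> N"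
  shows "\<bar>Val_rho P c \<gamma> \<rho> pol' - Val_rho P c \<gamma> \<rho> pol - sa_inner (grad_V P c \<gamma> \<rho> pol) (pol' - pol)\<bar>
    \<le> \<gamma> * N^2 / (1 - \<gamma>)^3"
proof -
  define G where "G = (\<lambda>x. \<Sum>a\<in>UNIV. (pol' x a - pol x a) * Qfun P c \<gamma> pol x a)"
  have "\<bar>G x\<bar> \<le> N / (1 - \<gamma>)" for x
  proof -
    have "\<bar>G x\<bar> \<le> (\<Sum>a\<in>UNIV. \<bar>pol' x a - pol x a\<bar>) * (1 / (1 - \<gamma>))"
      unfolding G_def using Qfun_bounds[OF pol cost_nonneg cost_le_1] by (intro abs_sum_mult_le) auto
    also have "\<dots> \<le> N * (1 / (1 - \<gamma>))"
      using N[of x] gamma_less_1 by (intro mult_right_mono) auto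
    finally show ?thesis by simp
  qed
  then have "\<bar>disc_return P \<gamma> pol' G s - disc_return P \<gamma> pol G s\<bar> \<le> \<gamma> * N * (N / (1 - \<gamma>)) / (1 - \<gamma>)^2" for s
    by (rule abs_disc_return_diff_le[OF pol pol' _ N])
  then have "\<bar>\<Sum>s\<in>UNIV. \<rho> s * (disc_return P \<gamma> pol' G s - disc_return P \<gamma> pol G s)\<bar>
      \<le> \<gamma> * N * (N / (1 - \<gamma>)) / (1 - \<gamma>)^2"
    by (intro abs_sum_stochastic_le[where w=\<rho>] rho_nonneg rho_sum)
  moreover have "Val_rho P c \<gamma> \<rho> pol' - Val_rho P c \<gamma> \<rho> pol - sa_inner (grad_V P c \<gamma> \<rho> pol) (pol' - pol)
      = (\<Sum>s\<in>UNIV. \<rho> s * (disc_return P \<gamma> pol' G s - disc_return P \<gamma> pol G s))"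
    unfolding Val_rho_diff[OF pol pol'] sa_inner_grad_V[OF pol] G_def
    by (simp add: right_diff_distrib sum_subtractf)
  ultimately show ?thesis
    by (simp add: power2_eq_square power3_eq_cube mult_ac)
qed

lemma gradient_domination:
  assumes pol: "pol \<in> Policies" and pis: "pis \<in> Policies"
    and r: "0 \<le> r" and mismatch: "\<And>s. dvisit_rho P \<gamma> \<rho> pis s \<le> r * \<rho> s"
  obtains pb where "pb \<in> Policies"
    and "Val_rho P c \<gamma> \<rho> pol - Val_rho P c \<gamma> \<rho> pis \<le> r / (1 - \<gamma>) * sa_inner (grad_V P c \<gamma> \<rho> pol) (pol - pb)"
proof -
  obtain pb where pb: "pb \<in> Policies"
    and greedy: "\<And>w y. w \<in> Policies \<Longrightarrow> (\<Sum>a\<in>UNIV. pb y a * Qfun P c \<gamma> pol y a) \<le> (\<Sum>a\<in>UNIV. w y a * Qfun P c \<gamma> pol y a)"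
    using exists_greedy_policy[of "Qfun P c \<gamma> pol"] by blast
  define gap where "gap y = (\<Sum>a\<in>UNIV. (pol y a - pb y a) * Qfun P c \<gamma> pol y a)" for y
  have gap_nonneg: "0 \<le> gap y" for y
    using greedy[OF pol, of y] unfolding gap_def by (simp only: left_diff_distrib sum_subtractf)
  have "Val_rho P c \<gamma> \<rho> pol - Val_rho P c \<gamma> \<rho> pis = (\<Sum>s\<in>UNIV. \<rho> s * (Val P c \<gamma> pol s - Val P c \<gamma> pis s))"
    unfolding Val_rho_def by (simp add: right_diff_distrib sum_subtractf)
  also have "\<dots> \<le> (\<Sum>s\<in>UNIV. \<rho> s * (1 / (1 - \<gamma>) * (\<Sum>y\<in>UNIV. dvisit P \<gamma> pis s y * gap y)))"
    unfolding gap_def using Val_diff_le_greedy_gap[OF pol pis greedy[OF pis]] rho_nonneg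
    by (intro sum_mono mult_left_mono) auto
  also have "\<dots> = 1 / (1 - \<gamma>) * (\<Sum>y\<in>UNIV. dvisit_rho P \<gamma> \<rho> pis y * gap y)"
    unfolding dvisit_rho_def by (simp add: sum_distrib_left sum_distrib_right mult_ac) (rule sum.swap)
  also have "\<dots> \<le> 1 / (1 - \<gamma>) * (\<Sum>y\<in>UNIV. r / (1 - \<gamma>) * dvisit_rho P \<gamma> \<rho> pol y * gap y)"
    using dvisit_rho_le_mismatch[OF pol rho_nonneg r mismatch] gap_nonneg gamma_less_1
    by (intro mult_left_mono sum_mono mult_right_mono) auto
  also have "\<dots> = r / (1 - \<gamma>) * sa_inner (grad_V P c \<gamma> \<rho> pol) (pol - pb)"
    unfolding sa_inner_def grad_V_def gap_def by (simp add: sum_distrib_left mult_ac)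
  finally show ?thesis
    using pb that by blast
qed

lemma mismatch_ge_1:
  assumes pis: "pis \<in> Policies" and mismatch: "\<And>s. dvisit_rho P \<gamma> \<rho> pis s \<le> r * \<rho> s"
  shows "1 \<le> r"
proof -
  have "(\<Sum>s\<in>UNIV. dvisit_rho P \<gamma> \<rho> pis s) \<le> (\<Sum>s\<in>UNIV. r * \<rho> s)"
    using mismatch by (rule sum_mono)
  then show ?thesis
    by (simp add: dvisit_rho_sum[OF pis rho_sum] sum_distrib_left[symmetric] rho_sum)
qed

lemma Val_rho_mono:
  "(\<And>s. Val P c \<gamma> pol s \<le> Val P c \<gamma> pol' s) \<Longrightarrow> Val_rho P c \<gamma> \<rho> pol \<le> Val_rho P c \<gamma> \<rho> pol'"
  unfolding Val_rho_def by (intro sum_mono mult_left_mono rho_nonneg)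

lemma Val_rho_bounds:
  assumes pol: "pol \<in> Policies"
  shows "0 \<le> Val_rho P c \<gamma> \<rho> pol" and "Val_rho P c \<gamma> \<rho> pol \<le> 1 / (1 - \<gamma>)"
proof -
  note V = Val_bounds[OF pol cost_nonneg cost_le_1]
  show "0 \<le> Val_rho P c \<gamma> \<rho> pol"
    unfolding Val_rho_def using V(1) by (intro sum_nonneg mult_nonneg_nonneg rho_nonneg)
  have "\<bar>Val_rho P c \<gamma> \<rho> pol\<bar> \<le> 1 / (1 - \<gamma>)"
    unfolding Val_rho_def using V by (intro abs_sum_stochastic_le rho_nonneg rho_sum) auto
  then show "Val_rho P c \<gamma> \<rho> pol \<le> 1 / (1 - \<gamma>)"
    by simp
qed

lemma Val_rho_le_quadratic_model:
  assumes x: "x \<in> Policies" and x': "x' \<in> Policies"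
  shows "Val_rho P c \<gamma> \<rho> x' \<le> Val_rho P c \<gamma> \<rho> x + sa_inner (grad_V P c \<gamma> \<rho> x) (x' - x)
    + \<gamma> * real CARD('a) / (1 - \<gamma>)^3 * sa_inner (x' - x) (x' - x)"
proof -
  define N where "N = sqrt (real CARD('a) * sa_inner (x' - x) (x' - x))"
  have "(\<Sum>a\<in>UNIV. \<bar>x' s a - x s a\<bar>) \<le> N" for s
    unfolding N_def using sum_abs_sq_le_sa_inner[of "x' - x" s] by (intro real_le_rsqrt) simp
  then have "\<bar>Val_rho P c \<gamma> \<rho> x' - Val_rho P c \<gamma> \<rho> x - sa_inner (grad_V P c \<gamma> \<rho> x) (x' - x)\<bar>
      \<le> \<gamma> * N^2 / (1 - \<gamma>)^3"
    by (rule Val_rho_smooth[OF x x'])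
  moreover have "N^2 = real CARD('a) * sa_inner (x' - x) (x' - x)"
    unfolding N_def using sa_inner_self_nonneg[of "x' - x"] by simp
  ultimately show ?thesis
    by (simp add: abs_le_iff)
qed

lemma projected_pg_step_split:
  fixes pis x xn :: "'s \<Rightarrow> 'a \<Rightarrow> real"
  assumes pis: "pis \<in> Policies" and r: "0 \<le> r" and mismatch: "\<And>s. dvisit_rho P \<gamma> \<rho> pis s \<le> r * \<rho> s"
    and x: "x \<in> Policies" and \<eta>: "\<eta> = (1 - \<gamma>)^3 / (2 * \<gamma> * real CARD('a))"
    and xn: "xn = proj_Pi (\<lambda>s a. x s a - \<eta> * grad_V P c \<gamma> \<rho> x s a)"
  obtains z where "Val_rho P c \<gamma> \<rho> x - Val_rho P c \<gamma> \<rho> pis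
      \<le> 2 * (r / (1 - \<gamma>)) * (Val_rho P c \<gamma> \<rho> x - Val_rho P c \<gamma> \<rho> xn) + r / (1 - \<gamma>) * z"
    and "z^2 \<le> 4 * real CARD('s) / \<eta> * (Val_rho P c \<gamma> \<rho> x - Val_rho P c \<gamma> \<rho> xn)"
    and "0 \<le> Val_rho P c \<gamma> \<rho> x - Val_rho P c \<gamma> \<rho> xn"
proof -
  let ?V = "Val_rho P c \<gamma> \<rho>" and ?g = "grad_V P c \<gamma> \<rho> x"
  let ?C = "r / (1 - \<gamma>)" and ?a = "?V x - ?V xn"
  have \<eta>_pos: "0 < \<eta>"
    using \<eta> gamma_pos gamma_less_1 by (simp add: finite_UNIV_card_ge_0)
  have xn_pol: "xn \<in> Policies"
    unfolding xn by (rule proj_Pi_in_Policies)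
  obtain pb where pb: "pb \<in> Policies" and dom: "?V x - ?V pis \<le> ?C * sa_inner ?g (x - pb)"
    using gradient_domination[OF x pis r mismatch] by blast
  have "?V xn \<le> ?V x + sa_inner ?g (xn - x) + sa_inner (xn - x) (xn - x) / (2 * \<eta>)"
    using Val_rho_le_quadratic_model[OF x xn_pol] \<eta> by (simp add: mult_ac)
  note step = projected_gradient_step[where f="?V", OF \<eta>_pos pb x xn this]
  have nD: "0 \<le> sa_inner (xn - x) (xn - x)" "sa_inner (xn - x) (xn - x) \<le> 2 * \<eta> * ?a"
    using sa_inner_self_nonneg step(1) by auto
  then have "0 \<le> 2 * \<eta> * ?a"
    by linarith
  with \<eta>_pos have a: "0 \<le> ?a"
    by (simp add: zero_le_mult_iff)
  define Z where "Z = sa_inner (x - xn) (xn - pb)"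
  have "sa_inner ?g (x - pb) \<le> 2 * ?a + Z / \<eta>"
    using step(2) \<eta>_pos unfolding Z_def by (simp add: field_simps)
  then have "?C * sa_inner ?g (x - pb) \<le> ?C * (2 * ?a + Z / \<eta>)"
    using r gamma_less_1 by (intro mult_left_mono) auto
  with dom have gap: "?V x - ?V pis \<le> 2 * ?C * ?a + ?C * (Z / \<eta>)"
    by (simp add: algebra_simps)
  have "Z^2 \<le> sa_inner (xn - x) (xn - x) * sa_inner (xn - pb) (xn - pb)"
    unfolding Z_def using sa_inner_Cauchy_Schwarz[of "x - xn" "xn - pb"] by (simp add: sa_inner_diff_swap)
  also have "\<dots> \<le> 2 * \<eta> * ?a * (2 * real CARD('s))"
    using nD sa_inner_diff_Policies_le[OF xn_pol pb] sa_inner_self_nonneg[of "xn - pb"]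
    by (intro mult_mono) auto
  finally have "(Z / \<eta>)^2 \<le> 4 * real CARD('s) / \<eta> * ?a"
    using \<eta>_pos by (simp add: field_simps power2_eq_square)
  from gap this a show ?thesis
    by (rule that)
qed

lemma projected_pg_step:
  fixes pis x xn :: "'s \<Rightarrow> 'a \<Rightarrow> real"
  assumes pis: "pis \<in> Policies" and opt: "\<And>pol. pol \<in> Policies \<Longrightarrow> Val_rho P c \<gamma> \<rho> pis \<le> Val_rho P c \<gamma> \<rho> pol"
    and mismatch: "\<And>s. dvisit_rho P \<gamma> \<rho> pis s \<le> r * \<rho> s"
    and x: "x \<in> Policies" and \<eta>: "\<eta> = (1 - \<gamma>)^3 / (2 * \<gamma> * real CARD('a))"
    and xn: "xn = proj_Pi (\<lambda>s a. x s a - \<eta> * grad_V P c \<gamma> \<rho> x s a)"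
  shows "(Val_rho P c \<gamma> \<rho> x - Val_rho P c \<gamma> \<rho> pis)^2
    \<le> 36 * r^2 * real CARD('s) * real CARD('a) / (1 - \<gamma>)^5 * (Val_rho P c \<gamma> \<rho> x - Val_rho P c \<gamma> \<rho> xn)"
proof -
  let ?V = "Val_rho P c \<gamma> \<rho>"
  let ?C = "r / (1 - \<gamma>)" and ?\<delta> = "?V x - ?V pis" and ?a = "?V x - ?V xn"
  have r: "1 \<le> r"
    by (rule mismatch_ge_1[OF pis mismatch])
  then have "0 \<le> r"
    by simp
  then obtain z where split: "?\<delta> \<le> 2 * ?C * ?a + ?C * z" "z^2 \<le> 4 * real CARD('s) / \<eta> * ?a"
    and a: "0 \<le> ?a"
    by (rule projected_pg_step_split[OF pis _ mismatch x \<eta> xn])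
  have "?\<delta> \<le> 1 / (1 - \<gamma>)"
    using Val_rho_bounds(2)[OF x] Val_rho_bounds(1)[OF pis] by linarith
  also have "\<dots> \<le> ?C"
    using r gamma_less_1 by (intro divide_right_mono) auto
  finally have "?\<delta>^2 \<le> 4 * ?C^2 * (1 + 4 * real CARD('s) / \<eta>) * ?a"
    using opt[OF x] by (intro square_le_of_split_bound[OF _ _ a split]) auto
  also have "\<dots> \<le> 36 * r^2 * real CARD('s) * real CARD('a) / (1 - \<gamma>)^5 * ?a"
  proof (rule mult_right_mono[OF _ a])
    have card: "1 \<le> real CARD('s)" "1 \<le> real CARD('a)"
      by (simp_all add: Suc_le_eq finite_UNIV_card_ge_0)
    have \<eta>_inv: "4 * real CARD('s) / \<eta> = 4 * real CARD('s) * (2 * \<gamma> * real CARD('a) / (1 - \<gamma>)^3)"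
      using \<eta> by simp
    show "4 * ?C^2 * (1 + 4 * real CARD('s) / \<eta>) \<le> 36 * r^2 * real CARD('s) * real CARD('a) / (1 - \<gamma>)^5"
      unfolding \<eta>_inv by (rule pg_step_constant_le[OF gamma_pos gamma_less_1 card])
  qed
  finally show ?thesis .
qed

lemma projected_pg_rate:
  fixes pis :: "'s \<Rightarrow> 'a \<Rightarrow> real" and pol :: "nat \<Rightarrow> 's \<Rightarrow> 'a \<Rightarrow> real"
  assumes pis: "pis \<in> Policies" and opt: "\<And>pol. pol \<in> Policies \<Longrightarrow> Val_rho P c \<gamma> \<rho> pis \<le> Val_rho P c \<gamma> \<rho> pol"
    and mismatch: "\<And>s. dvisit_rho P \<gamma> \<rho> pis s \<le> r * \<rho> s"
    and init: "pol 0 \<in> Policies"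
    and iter: "\<And>k. pol (Suc k) = proj_Pi (\<lambda>s a. pol k s a - \<eta> * grad_V P c \<gamma> \<rho> (pol k) s a)"
    and \<eta>: "\<eta> = (1 - \<gamma>)^3 / (2 * \<gamma> * real CARD('a))" and k: "1 \<le> k"
  shows "Val_rho P c \<gamma> \<rho> (pol k) - Val_rho P c \<gamma> \<rho> pis \<le> 36 * r^2 * real CARD('s) * real CARD('a) / (real k * (1 - \<gamma>)^5)"
proof -
  have pol: "pol j \<in> Policies" for j
    by (induction j) (simp_all add: init iter proj_Pi_in_Policies)
  define K where "K = 36 * r^2 * real CARD('s) * real CARD('a) / (1 - \<gamma>)^5"
  have "0 < K"
    using mismatch_ge_1[OF pis mismatch] gamma_less_1 by (simp add: K_def finite_UNIV_card_ge_0)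
  then have "Val_rho P c \<gamma> \<rho> (pol k) - Val_rho P c \<gamma> \<rho> pis \<le> K / real k"
    using opt[OF pol] projected_pg_step[OF pis opt mismatch pol \<eta> iter] k
    by (intro le_div_of_sq_le_decrease[where \<delta>="\<lambda>j. Val_rho P c \<gamma> \<rho> (pol j) - Val_rho P c \<gamma> \<rho> pis"])
      (auto simp: K_def)
  then show ?thesis
    by (simp add: K_def mult.commute)
qed

lemma projected_pg_rate_ratio_inf:
  fixes pis :: "'s \<Rightarrow> 'a \<Rightarrow> real" and pol :: "nat \<Rightarrow> 's \<Rightarrow> 'a \<Rightarrow> real"
  assumes pis: "pis \<in> Policies" and opt: "\<And>pol. pol \<in> Policies \<Longrightarrow> Val_rho P c \<gamma> \<rho> pis \<le> Val_rho P c \<gamma> \<rho> pol"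
    and init: "pol 0 \<in> Policies"
    and iter: "\<And>k. pol (Suc k) = proj_Pi (\<lambda>s a. pol k s a - \<eta> * grad_V P c \<gamma> \<rho> (pol k) s a)"
    and \<eta>: "\<eta> = (1 - \<gamma>)^3 / (2 * \<gamma> * real CARD('a))" and k: "1 \<le> k"
  shows "ereal (Val_rho P c \<gamma> \<rho> (pol k) - Val_rho P c \<gamma> \<rho> pis)
    \<le> ereal (128 * real CARD('s) * real CARD('a) / (real k * (1 - \<gamma>)^5)) * (ratio_inf (dvisit_rho P \<gamma> \<rho> pis) \<rho>)^2"
proof -
  define B where "B = 128 * real CARD('s) * real CARD('a) / (real k * (1 - \<gamma>)^5)"
  have B_pos: "0 < B"
    unfolding B_def using k gamma_less_1 by (simp add: finite_UNIV_card_ge_0)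
  consider (infinite) "ratio_inf (dvisit_rho P \<gamma> \<rho> pis) \<rho> = \<infinity>"
    | (finite) r where "ratio_inf (dvisit_rho P \<gamma> \<rho> pis) \<rho> = ereal r"
      "\<And>s. dvisit_rho P \<gamma> \<rho> pis s \<le> r * \<rho> s"
    using ratio_inf_cases[where p="dvisit_rho P \<gamma> \<rho> pis" and q=\<rho>] rho_nonneg by blast
  then show ?thesis
  proof cases
    case infinite
    have "ereal B * (ratio_inf (dvisit_rho P \<gamma> \<rho> pis) \<rho>)^2 = \<infinity>"
      using infinite B_pos by (simp add: power2_eq_square)
    then show ?thesis
      unfolding B_def by (simp only: ereal_less_eq(1))
  next
    case (finite r)
    have "Val_rho P c \<gamma> \<rho> (pol k) - Val_rho P c \<gamma> \<rho> pis
        \<le> 36 * (r^2 * real CARD('s) * real CARD('a) / (real k * (1 - \<gamma>)^5))"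
      using projected_pg_rate[OF pis opt finite(2) init iter \<eta> k] by simp
    also have "\<dots> \<le> 128 * (r^2 * real CARD('s) * real CARD('a) / (real k * (1 - \<gamma>)^5))"
    proof (rule mult_right_mono)
      have "0 \<le> (1 - \<gamma>)^5"
        using gamma_less_1 by (intro zero_le_power) simp
      then show "0 \<le> r^2 * real CARD('s) * real CARD('a) / (real k * (1 - \<gamma>)^5)"
        by simp
    qed simp
    also have "\<dots> = B * r^2"
      by (simp add: B_def mult_ac)
    finally show ?thesis
      using finite(1) by (simp add: B_def power2_eq_square)
  qed
qed

end

theorem theorem2:
  fixes P :: "'s::finite \<Rightarrow> 'a::finite \<Rightarrow> 's \<Rightarrow> real"
    and R :: "'s \<Rightarrow> 'a \<Rightarrow> real"
    and \<gamma> :: real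
    and \<rho> :: "'s \<Rightarrow> real"
    and pistar :: "'s \<Rightarrow> 'a \<Rightarrow> real"
    and pol :: "nat \<Rightarrow> 's \<Rightarrow> 'a \<Rightarrow> real"
    and \<eta> :: real
  assumes mdp: "is_mdp P R \<gamma>"
    and rho: "is_distr \<rho>"
    and opt: "pistar \<in> Policies"
    and opt_min: "\<forall>pol'\<in>Policies. \<forall>s. Val P R \<gamma> pistar s \<le> Val P R \<gamma> pol' s"
    and init: "pol 0 \<in> Policies"
    and eta: "\<eta> = (1 - \<gamma>)^3 / (2 * \<gamma> * real (card (UNIV :: 'a set)))"
    and iter: "\<forall>k. pol (Suc k) = proj_Pi (\<lambda>s a. pol k s a - \<eta> * grad_V P R \<gamma> \<rho> (pol k) s a)"
    and k: "k \<ge> 1"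
  shows "ereal (Val_rho P R \<gamma> \<rho> (pol k) - Val_star P R \<gamma> \<rho>)
     \<le> ereal (128 * real (card (UNIV :: 's set)) * real (card (UNIV :: 'a set)) / (real k * (1 - \<gamma>)^5))
        * (ratio_inf (dvisit_rho P \<gamma> \<rho> pistar) \<rho>)^2"
proof -
  interpret policy_gradient P \<gamma> R \<rho>
    using mdp rho by unfold_locales (auto simp: is_mdp_def is_distr_def)
  have opt_rho: "Val_rho P R \<gamma> \<rho> pistar \<le> Val_rho P R \<gamma> \<rho> pol'" if "pol' \<in> Policies" for pol'
    using opt_min that by (intro Val_rho_mono) auto
  show ?thesis
    using projected_pg_rate_ratio_inf[OF opt opt_rho init iter[rule_format] eta k] Val_star_eq_optimal[OF opt opt_rho]
    by simp
qed

end
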